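(* Let $(X,d,\kappa)$ be a digital metric space, where either $X$ is finite or $d$ is an $\ell_p$ metric for some $1\le p\le\infty$. Let $S,T:X\to X$. Then the following are equivalent: (i) $S$ and $T$ are compatible; (ii) $S$ and $T$ are compatible of type (A); (iii) $S$ and $T$ are compatible of type (P).
   Context: A digital metric space is a triple $(X,d,\kappa)$ where $X\subset\mathbb{Z}^n$ for some positive integer $n$, $\kappa$ is an adjacency relation on $X$ (so $(X,\kappa)$ is a graph), and $d$ is a metric on $X$. For $x,y\in\mathbb{Z}^n$, the $\ell_p$ metric is $d(x,y)=(\sum_{i=1}^n|x_i-y_i|^p)^{1/p}$ for $1\le p<\infty$ and $d(x,y)=\max_i|x_i-y_i|$ for $p=\infty$. Limits are taken with respect to the metric $d$. Call a sequence $\{x_n\}\subset X$ admissible if $\lim_{n\to\infty}S(x_n)=\lim_{n\to\infty}T(x_n)=t$ for some $t\in X$. $S$ and $T$ are compatible if $\lim_{n\to\infty}d(S(T(x_n)),T(S(x_n)))=0$ for every admissible sequence; compatible of type (A) if $\lim_{n\to\infty}d(S(T(x_n)),T(T(x_n)))=0=\lim_{n\to\infty}d(T(S(x_n)),S(S(x_n)))$ for every admissible sequence; compatible of type (P) if $\lim_{n\to\infty}d(S(S(x_n)),T(T(x_n)))=0$ for every admissible sequence. *)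

theory Defs
  imports "HOL-Analysis.Analysis"
begin

definition metric_on :: "('a set) \<Rightarrow> ('a \<Rightarrow> 'a \<Rightarrow> real) \<Rightarrow> bool" where
  "metric_on X d \<longleftrightarrow>
     (\<forall>x\<in>X. \<forall>y\<in>X. d x y \<ge> 0 \<and> (d x y = 0 \<longleftrightarrow> x = y) \<and> d x y = d y x) \<and>
     (\<forall>x\<in>X. \<forall>y\<in>X. \<forall>z\<in>X. d x z \<le> d x y + d y z)"

definition adjacency_on :: "('a set) \<Rightarrow> ('a \<Rightarrow> 'a \<Rightarrow> bool) \<Rightarrow> bool" where
  "adjacency_on X \<kappa> \<longleftrightarrow> (\<forall>x\<in>X. \<forall>y\<in>X. \<kappa> x y \<longleftrightarrow> \<kappa> y x) \<and> (\<forall>x\<in>X. \<not> \<kappa> x x)"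

definition digital_metric_space ::
  "((int ^ 'n) set) \<Rightarrow> (int ^ 'n \<Rightarrow> int ^ 'n \<Rightarrow> real) \<Rightarrow> (int ^ 'n \<Rightarrow> int ^ 'n \<Rightarrow> bool) \<Rightarrow> bool" where
  "digital_metric_space X d \<kappa> \<longleftrightarrow> metric_on X d \<and> adjacency_on X \<kappa>"

definition lp_dist :: "real \<Rightarrow> int ^ 'n \<Rightarrow> int ^ 'n \<Rightarrow> real" where
  "lp_dist p x y = (\<Sum>i\<in>UNIV. \<bar>real_of_int (x $ i - y $ i)\<bar> powr p) powr (1 / p)"

definition linf_dist :: "int ^ 'n \<Rightarrow> int ^ 'n \<Rightarrow> real" where
  "linf_dist x y = Max ((\<lambda>i. \<bar>real_of_int (x $ i - y $ i)\<bar>) ` UNIV)"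

definition is_lp_metric :: "((int ^ 'n) set) \<Rightarrow> (int ^ 'n \<Rightarrow> int ^ 'n \<Rightarrow> real) \<Rightarrow> bool" where
  "is_lp_metric X d \<longleftrightarrow>
     (\<exists>p::real. p \<ge> 1 \<and> (\<forall>x\<in>X. \<forall>y\<in>X. d x y = lp_dist p x y)) \<or>
     (\<forall>x\<in>X. \<forall>y\<in>X. d x y = linf_dist x y)"

definition d_tendsto :: "('a \<Rightarrow> 'a \<Rightarrow> real) \<Rightarrow> (nat \<Rightarrow> 'a) \<Rightarrow> 'a \<Rightarrow> bool" where
  "d_tendsto d s t \<longleftrightarrow> (\<lambda>n. d (s n) t) \<longlonglongrightarrow> 0"

definition admissible :: "'a set \<Rightarrow> ('a \<Rightarrow> 'a \<Rightarrow> real) \<Rightarrow> ('a \<Rightarrow> 'a) \<Rightarrow> ('a \<Rightarrow> 'a) \<Rightarrow> (nat \<Rightarrow> 'a) \<Rightarrow> bool" where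
  "admissible X d S T x \<longleftrightarrow> (\<forall>n. x n \<in> X) \<and>
     (\<exists>t\<in>X. d_tendsto d (\<lambda>n. S (x n)) t \<and> d_tendsto d (\<lambda>n. T (x n)) t)"

definition compatible :: "'a set \<Rightarrow> ('a \<Rightarrow> 'a \<Rightarrow> real) \<Rightarrow> ('a \<Rightarrow> 'a) \<Rightarrow> ('a \<Rightarrow> 'a) \<Rightarrow> bool" where
  "compatible X d S T \<longleftrightarrow> (\<forall>x. admissible X d S T x \<longrightarrow>
     (\<lambda>n. d (S (T (x n))) (T (S (x n)))) \<longlonglongrightarrow> 0)"

definition compatible_A :: "'a set \<Rightarrow> ('a \<Rightarrow> 'a \<Rightarrow> real) \<Rightarrow> ('a \<Rightarrow> 'a) \<Rightarrow> ('a \<Rightarrow> 'a) \<Rightarrow> bool" where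
  "compatible_A X d S T \<longleftrightarrow> (\<forall>x. admissible X d S T x \<longrightarrow>
     (\<lambda>n. d (S (T (x n))) (T (T (x n)))) \<longlonglongrightarrow> 0 \<and>
     (\<lambda>n. d (T (S (x n))) (S (S (x n)))) \<longlonglongrightarrow> 0)"

definition compatible_P :: "'a set \<Rightarrow> ('a \<Rightarrow> 'a \<Rightarrow> real) \<Rightarrow> ('a \<Rightarrow> 'a) \<Rightarrow> ('a \<Rightarrow> 'a) \<Rightarrow> bool" where
  "compatible_P X d S T \<longleftrightarrow> (\<forall>x. admissible X d S T x \<longrightarrow>
     (\<lambda>n. d (S (S (x n))) (T (T (x n)))) \<longlonglongrightarrow> 0)"

end

theory Submission
  imports Defs
begin

text \<open>In both cases X is uniformly discrete with respect to d: distinct points are at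
  distance at least some e > 0 (the least distance of a finite X, or 1 for an l_p metric on
  integer points). Hence every d-convergent sequence in X is eventually constant, so along an
  admissible sequence eventually S (x n) = T (x n) = t. All the distances occurring in the three
  compatibility conditions are then eventually the constant d (S t) (T t) or d (T t) (S t), and
  each condition says exactly that S t = T t.\<close>

definition d_uniform_discrete :: "'a set \<Rightarrow> ('a \<Rightarrow> 'a \<Rightarrow> real) \<Rightarrow> bool" where
  "d_uniform_discrete X d \<longleftrightarrow> (\<exists>e>0. \<forall>x\<in>X. \<forall>y\<in>X. d x y < e \<longrightarrow> x = y)"

lemma finite_metric_uniform_discrete:
  assumes "metric_on X d" and "finite X"
  shows "d_uniform_discrete X d"
proof -
  let ?D = "insert 1 ((\<lambda>(x, y). d x y) ` {(x, y). x \<in> X \<and> y \<in> X \<and> x \<noteq> y})"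
  have "finite ?D"
    using assms(2) by (auto intro: finite_subset[of _ "X \<times> X"])
  moreover have "\<forall>a\<in>?D. a > 0"
    using assms(1) unfolding metric_on_def by (force simp: order_le_less)
  ultimately have "Min ?D > 0"
    by simp
  moreover have "x = y" if "x \<in> X" "y \<in> X" "d x y < Min ?D" for x y
  proof (rule ccontr)
    assume "x \<noteq> y"
    with that(1,2) have "d x y \<in> ?D"
      by force
    then have "Min ?D \<le> d x y"
      using \<open>finite ?D\<close> by simp
    with that(3) show False
      by simp
  qed
  ultimately show ?thesis
    unfolding d_uniform_discrete_def by blast
qed

lemma int_vec_neq_obtains_component:
  fixes x y :: "int ^ 'n"
  assumes "x \<noteq> y"
  obtains i where "1 \<le> \<bar>real_of_int (x $ i - y $ i)\<bar>"
proof -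
  obtain i where "x $ i \<noteq> y $ i"
    using assms by (metis vec_eq_iff)
  then have "1 \<le> \<bar>x $ i - y $ i\<bar>"
    by linarith
  then show thesis
    using that by (metis of_int_1_le_iff of_int_abs)
qed

lemma lp_dist_ge_1:
  fixes x y :: "int ^ 'n"
  assumes "x \<noteq> y" and "1 \<le> p"
  shows "1 \<le> lp_dist p x y"
proof -
  obtain i where i: "1 \<le> \<bar>real_of_int (x $ i - y $ i)\<bar>"
    using int_vec_neq_obtains_component[OF assms(1)] .
  have "1 \<le> \<bar>real_of_int (x $ i - y $ i)\<bar> powr p"
    using i assms(2) by (simp add: ge_one_powr_ge_zero)
  also have "\<dots> \<le> (\<Sum>j\<in>UNIV. \<bar>real_of_int (x $ j - y $ j)\<bar> powr p)"
    by (rule member_le_sum) auto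
  finally show ?thesis
    unfolding lp_dist_def using assms(2) by (simp add: ge_one_powr_ge_zero)
qed

lemma linf_dist_ge_1:
  fixes x y :: "int ^ 'n"
  assumes "x \<noteq> y"
  shows "1 \<le> linf_dist x y"
proof -
  obtain i where "1 \<le> \<bar>real_of_int (x $ i - y $ i)\<bar>"
    using int_vec_neq_obtains_component[OF assms] .
  also have "\<dots> \<le> linf_dist x y"
    unfolding linf_dist_def by (rule Max_ge) auto
  finally show ?thesis .
qed

lemma lp_metric_uniform_discrete:
  assumes "is_lp_metric X d"
  shows "d_uniform_discrete X d"
proof -
  have "\<forall>x\<in>X. \<forall>y\<in>X. d x y < 1 \<longrightarrow> x = y"
    using assms lp_dist_ge_1 linf_dist_ge_1 unfolding is_lp_metric_def by (metis not_le)
  then show ?thesis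
    unfolding d_uniform_discrete_def by (intro exI[of _ 1]) simp
qed

lemma d_tendsto_uniform_discrete_eventually_eq:
  assumes "d_uniform_discrete X d" and "d_tendsto d s t"
    and "\<forall>n. s n \<in> X" and "t \<in> X"
  shows "eventually (\<lambda>n. s n = t) sequentially"
proof -
  obtain e where "e > 0" and e: "\<forall>x\<in>X. \<forall>y\<in>X. d x y < e \<longrightarrow> x = y"
    using assms(1) unfolding d_uniform_discrete_def by blast
  have "eventually (\<lambda>n. dist (d (s n) t) 0 < e) sequentially"
    using assms(2) \<open>e > 0\<close> unfolding d_tendsto_def by (rule tendstoD)
  then show ?thesis
    by (rule eventually_mono) (use e assms(3,4) in \<open>auto simp: dist_real_def\<close>)
qed

lemma admissible_eventually_coincide:
  assumes "d_uniform_discrete X d" and "admissible X d S T x"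
    and "\<forall>x\<in>X. S x \<in> X" and "\<forall>x\<in>X. T x \<in> X"
  obtains t where "t \<in> X" and "eventually (\<lambda>n. S (x n) = t \<and> T (x n) = t) sequentially"
proof -
  obtain t where x: "\<forall>n. x n \<in> X" and "t \<in> X"
    and S: "d_tendsto d (\<lambda>n. S (x n)) t" and T: "d_tendsto d (\<lambda>n. T (x n)) t"
    using assms(2) unfolding admissible_def by blast
  have "eventually (\<lambda>n. S (x n) = t) sequentially"
    using d_tendsto_uniform_discrete_eventually_eq[OF assms(1) S] x assms(3) \<open>t \<in> X\<close> by blast
  moreover have "eventually (\<lambda>n. T (x n) = t) sequentially"
    using d_tendsto_uniform_discrete_eventually_eq[OF assms(1) T] x assms(4) \<open>t \<in> X\<close> by blast
  ultimately have "eventually (\<lambda>n. S (x n) = t \<and> T (x n) = t) sequentially"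
    by (rule eventually_conj)
  with \<open>t \<in> X\<close> show thesis
    by (rule that)
qed

lemma admissible_compatibility_limits_iff:
  assumes "metric_on X d" and "d_uniform_discrete X d" and "admissible X d S T x"
    and "\<forall>x\<in>X. S x \<in> X" and "\<forall>x\<in>X. T x \<in> X"
  obtains t where
    "(\<lambda>n. d (S (T (x n))) (T (S (x n)))) \<longlonglongrightarrow> 0 \<longleftrightarrow> S t = T t"
    "(\<lambda>n. d (S (T (x n))) (T (T (x n)))) \<longlonglongrightarrow> 0 \<longleftrightarrow> S t = T t"
    "(\<lambda>n. d (T (S (x n))) (S (S (x n)))) \<longlonglongrightarrow> 0 \<longleftrightarrow> S t = T t"
    "(\<lambda>n. d (S (S (x n))) (T (T (x n)))) \<longlonglongrightarrow> 0 \<longleftrightarrow> S t = T t"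
proof -
  obtain t where "t \<in> X" and ev: "eventually (\<lambda>n. S (x n) = t \<and> T (x n) = t) sequentially"
    using admissible_eventually_coincide[OF assms(2,3,4,5)] .
  have dist_St_Tt: "d (S t) (T t) = 0 \<longleftrightarrow> S t = T t" "d (T t) (S t) = d (S t) (T t)"
    using assms(1,4,5) \<open>t \<in> X\<close> unfolding metric_on_def by blast+
  have limit_iff: "f \<longlonglongrightarrow> 0 \<longleftrightarrow> S t = T t"
    if "\<forall>n. S (x n) = t \<and> T (x n) = t \<longrightarrow> f n = d (S t) (T t)" for f
  proof -
    have "f \<longlonglongrightarrow> 0 \<longleftrightarrow> (\<lambda>n. d (S t) (T t)) \<longlonglongrightarrow> 0"
      using ev that by (intro tendsto_cong) (auto elim: eventually_mono)
    then show ?thesis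
      using dist_St_Tt(1) LIMSEQ_const_iff by metis
  qed
  show thesis
    by (rule that) (rule limit_iff, simp add: dist_St_Tt(2))+
qed

theorem theorem3p3:
  fixes X :: "(int ^ 'n) set"
    and d :: "int ^ 'n \<Rightarrow> int ^ 'n \<Rightarrow> real"
    and \<kappa> :: "int ^ 'n \<Rightarrow> int ^ 'n \<Rightarrow> bool"
    and S T :: "int ^ 'n \<Rightarrow> int ^ 'n"
  assumes "digital_metric_space X d \<kappa>"
    and "finite X \<or> is_lp_metric X d"
    and "\<forall>x\<in>X. S x \<in> X"
    and "\<forall>x\<in>X. T x \<in> X"
  shows "(compatible X d S T \<longleftrightarrow> compatible_A X d S T) \<and>
         (compatible_A X d S T \<longleftrightarrow> compatible_P X d S T)"
proof -
  have metric: "metric_on X d"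
    using assms(1) unfolding digital_metric_space_def by simp
  have discrete: "d_uniform_discrete X d"
    using assms(2) finite_metric_uniform_discrete[OF metric] lp_metric_uniform_discrete by blast
  have "((\<lambda>n. d (S (T (x n))) (T (S (x n)))) \<longlonglongrightarrow> 0 \<longleftrightarrow>
          (\<lambda>n. d (S (T (x n))) (T (T (x n)))) \<longlonglongrightarrow> 0 \<and>
          (\<lambda>n. d (T (S (x n))) (S (S (x n)))) \<longlonglongrightarrow> 0) \<and>
        ((\<lambda>n. d (S (T (x n))) (T (S (x n)))) \<longlonglongrightarrow> 0 \<longleftrightarrow>
          (\<lambda>n. d (S (S (x n))) (T (T (x n)))) \<longlonglongrightarrow> 0)"
    if admissible: "admissible X d S T x" for x
  proof -
    obtain t where limits:
      "(\<lambda>n. d (S (T (x n))) (T (S (x n)))) \<longlonglongrightarrow> 0 \<longleftrightarrow> S t = T t"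
      "(\<lambda>n. d (S (T (x n))) (T (T (x n)))) \<longlonglongrightarrow> 0 \<longleftrightarrow> S t = T t"
      "(\<lambda>n. d (T (S (x n))) (S (S (x n)))) \<longlonglongrightarrow> 0 \<longleftrightarrow> S t = T t"
      "(\<lambda>n. d (S (S (x n))) (T (T (x n)))) \<longlonglongrightarrow> 0 \<longleftrightarrow> S t = T t"
      using admissible_compatibility_limits_iff[OF metric discrete admissible assms(3,4)] .
    show ?thesis
      unfolding limits by simp
  qed
  then show ?thesis
    unfolding compatible_def compatible_A_def compatible_P_def by blast
qed

end
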